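(* Let $A\in\mathbb Z^{d\times n}$ with $\ker(A)\cap\mathbb N^n=\{0\}$. Suppose $b\in\ker(A)$ reduces the distance of a nonzero $x\in\ker(A)$, and $z\in\ker(A)$ has a conformal decomposition $z=x+y$ with $y\in\ker(A)$. Then $b$ reduces the distance of $z$.
   Context: For $z\in\mathbb Z^n$, $z^\pm\in\mathbb N^n$ are the unique vectors with disjoint supports and $z=z^+-z^-$; $\|\cdot\|$ is the $1$-norm. $z=x+y$ is a conformal decomposition if $z^+=x^++y^+$ and $z^-=x^-+y^-$. For nonzero $w\in\ker(A)$, $b\in\ker(A)$ reduces the distance of $w$ if there exist $(p,q)\in\{(w^+,w^-),(w^-,w^+)\}$ and $\varepsilon\in\{\pm1\}$ with $p+\varepsilon b\in\mathbb N^n$ and $\|p+\varepsilon b-q\|<\|w\|$. *)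

theory Defs
  imports "HOL-Analysis.Analysis"
begin

definition kerA :: "int ^ 'n ^ 'd \<Rightarrow> (int ^ 'n) set" where
  "kerA A = {x. A *v x = 0}"

definition natvec :: "int ^ 'n \<Rightarrow> bool" where
  "natvec x \<longleftrightarrow> (\<forall>i. x $ i \<ge> 0)"

definition pos_part :: "int ^ 'n \<Rightarrow> int ^ 'n" where
  "pos_part z = (\<chi> i. max (z $ i) 0)"

definition neg_part :: "int ^ 'n \<Rightarrow> int ^ 'n" where
  "neg_part z = (\<chi> i. max (- (z $ i)) 0)"

definition norm1 :: "int ^ 'n \<Rightarrow> int" where
  "norm1 z = (\<Sum>i\<in>UNIV. \<bar>z $ i\<bar>)"

definition conformal_decomp :: "int ^ 'n \<Rightarrow> int ^ 'n \<Rightarrow> int ^ 'n \<Rightarrow> bool" where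
  "conformal_decomp z x y \<longleftrightarrow> z = x + y \<and>
     pos_part z = pos_part x + pos_part y \<and> neg_part z = neg_part x + neg_part y"

definition reduces_distance :: "int ^ 'n ^ 'd \<Rightarrow> int ^ 'n \<Rightarrow> int ^ 'n \<Rightarrow> bool" where
  "reduces_distance A b w \<longleftrightarrow> w \<in> kerA A \<and> w \<noteq> 0 \<and> b \<in> kerA A \<and>
     (\<exists>(p, q) \<in> {(pos_part w, neg_part w), (neg_part w, pos_part w)}.
        \<exists>\<epsilon> \<in> {1, -1::int}. natvec (p + \<epsilon> *s b) \<and> norm1 (p + \<epsilon> *s b - q) < norm1 w)"

end

theory Submission
  imports Defs
begin

text \<open>A conformal sum adds positive and negative parts separately, so the 1-norm is additive
  over it. If the move \<open>p \<mapsto> p + \<epsilon> b\<close> shortens the distance between the two parts of \<open>x\<close>,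
  the same move applied to the matching part of \<open>z = x + y\<close> keeps it nonnegative, and by the
  triangle inequality the distance for \<open>z\<close> is at most the shortened distance for \<open>x\<close> plus
  \<open>\<parallel>y\<parallel>\<close>, which is below \<open>\<parallel>x\<parallel> + \<parallel>y\<parallel> = \<parallel>z\<parallel>\<close>.\<close>

lemma norm1_nonneg: "norm1 u \<ge> 0"
  unfolding norm1_def by (simp add: sum_nonneg)

lemma norm1_eq_0_iff: "norm1 u = 0 \<longleftrightarrow> u = 0"
  unfolding norm1_def by (simp add: sum_nonneg_eq_0_iff vec_eq_iff)

lemma norm1_triangle: "norm1 (u + v) \<le> norm1 u + norm1 v"
  unfolding norm1_def by (simp add: sum.distrib[symmetric] sum_mono abs_triangle_ineq)

lemma norm1_uminus: "norm1 (- u) = norm1 u"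
  unfolding norm1_def by simp

lemma natvec_pos_part: "natvec (pos_part u)"
  and natvec_neg_part: "natvec (neg_part u)"
  unfolding natvec_def pos_part_def neg_part_def by auto

lemma natvec_add: "natvec u \<Longrightarrow> natvec v \<Longrightarrow> natvec (u + v)"
  unfolding natvec_def by simp

lemma pos_part_minus_neg_part: "pos_part u - neg_part u = u"
  unfolding pos_part_def neg_part_def by (simp add: vec_eq_iff max_def)

lemma abs_eq_pos_part_plus_neg_part: "\<bar>u $ i\<bar> = pos_part u $ i + neg_part u $ i"
  unfolding pos_part_def neg_part_def by auto

lemma norm1_conformal_decomp:
  assumes "conformal_decomp z x y"
  shows "norm1 z = norm1 x + norm1 y"
proof -
  have "pos_part z = pos_part x + pos_part y" "neg_part z = neg_part x + neg_part y"
    using assms unfolding conformal_decomp_def by auto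
  then have "\<bar>z $ i\<bar> = \<bar>x $ i\<bar> + \<bar>y $ i\<bar>" for i
    unfolding abs_eq_pos_part_plus_neg_part by simp
  then show ?thesis
    unfolding norm1_def by (simp add: sum.distrib)
qed

lemma conformal_decomp_nonzero:
  assumes "conformal_decomp z x y" and "x \<noteq> 0"
  shows "z \<noteq> 0"
  using norm1_conformal_decomp[OF assms(1)] norm1_nonneg[of x] norm1_nonneg[of y] assms(2)
  by (simp add: norm1_eq_0_iff[symmetric])

lemma conformal_decomp_sign_pair:
  assumes "conformal_decomp z x y"
    and "(p, q) \<in> {(pos_part x, neg_part x), (neg_part x, pos_part x)}"
  obtains r s where "(p + r, q + s) \<in> {(pos_part z, neg_part z), (neg_part z, pos_part z)}"
    and "natvec r" and "norm1 (r - s) = norm1 y"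
proof -
  have z: "pos_part z = pos_part x + pos_part y" "neg_part z = neg_part x + neg_part y"
    using assms(1) unfolding conformal_decomp_def by auto
  have "norm1 (neg_part y - pos_part y) = norm1 y"
    by (metis minus_diff_eq norm1_uminus pos_part_minus_neg_part)
  then show thesis
    using assms(2) z that[of "pos_part y" "neg_part y"] that[of "neg_part y" "pos_part y"]
    by (auto simp: pos_part_minus_neg_part natvec_pos_part natvec_neg_part)
qed

lemma distance_move_add:
  fixes b p q r s :: "int ^ 'n"
  assumes "natvec (p + e *s b)" and "natvec r"
    and "norm1 (p + e *s b - q) < m" and "norm1 (r - s) = m'"
  shows "natvec ((p + r) + e *s b)" and "norm1 ((p + r) + e *s b - (q + s)) < m + m'"
proof -
  show "natvec ((p + r) + e *s b)"
    using natvec_add[OF assms(1,2)] by (simp add: algebra_simps)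
  have regroup: "(p + r) + e *s b - (q + s) = (p + e *s b - q) + (r - s)"
    by (simp add: algebra_simps)
  show "norm1 ((p + r) + e *s b - (q + s)) < m + m'"
    unfolding regroup using norm1_triangle[of "p + e *s b - q" "r - s"] assms(3,4) by linarith
qed

theorem lemma7p7:
  fixes A :: "int ^ 'n ^ 'd" and b x y z :: "int ^ 'n"
  assumes "\<forall>v. v \<in> kerA A \<and> natvec v \<longrightarrow> v = 0"
    and "x \<in> kerA A" and "x \<noteq> 0"
    and "reduces_distance A b x"
    and "z \<in> kerA A" and "y \<in> kerA A"
    and "conformal_decomp z x y"
  shows "reduces_distance A b z"
proof -
  from assms(4) obtain p q e
    where pq: "(p, q) \<in> {(pos_part x, neg_part x), (neg_part x, pos_part x)}"
      and e: "e \<in> {1, -1::int}"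
      and move: "natvec (p + e *s b)" "norm1 (p + e *s b - q) < norm1 x"
      and b: "b \<in> kerA A"
    unfolding reduces_distance_def by blast
  obtain r s where rs: "(p + r, q + s) \<in> {(pos_part z, neg_part z), (neg_part z, pos_part z)}"
    and "natvec r" and "norm1 (r - s) = norm1 y"
    using conformal_decomp_sign_pair[OF assms(7) pq] .
  then have "natvec ((p + r) + e *s b)" "norm1 ((p + r) + e *s b - (q + s)) < norm1 z"
    using distance_move_add[OF move(1) _ move(2)] norm1_conformal_decomp[OF assms(7)] by auto
  moreover have "z \<noteq> 0"
    using conformal_decomp_nonzero[OF assms(7,3)] .
  ultimately show ?thesis
    unfolding reduces_distance_def using assms(5) b e rs by blast
qed

end
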